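(* Let $I$ be an open interval, $h\in\mathbb{R}$, $\Delta:I\to(0,\infty)$ and $V:I\to\mathbb{C}$ smooth, and let $R$ be a $C^2$ solution of $\Delta^{-h}\frac{d}{dr}\left(\Delta^{h+1}\frac{dR}{dr}\right)=VR$ on $I$. Let $\alpha,\beta:I\to\mathbb{C}$ be smooth with $\beta$ nowhere zero, and suppose $$\gamma:=\alpha\left(\alpha+\beta'\Delta^{h+1}\right)-\beta\Delta^{h+1}\left(\alpha'+\beta\Delta^{h}V\right)$$ is nowhere zero on $I$ (primes denote $d/dr$). Define $\chi=\alpha R+\beta\Delta^{h+1}R'$. Then $$\Delta^{-h}\frac{d}{dr}\left(\Delta^{h+1}\chi'\right)-\Delta F\chi'-U\chi=0,$$ where $F=\gamma'/\gamma$ and $U=V+\frac{\Delta^{-h}}{\beta}\left[\left(2\alpha+\beta'\Delta^{h+1}\right)'-F\left(\alpha+\beta'\Delta^{h+1}\right)\right]$. Moreover $\gamma R=(\alpha+\beta'\Delta^{h+1})\chi-\beta\Delta^{h+1}\chi'$ and $\gamma R'=-(\alpha'+\beta\Delta^hV)\chi+\alpha\chi'$. *)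

theory Defs
  imports "HOL-Analysis.Analysis"
begin

definition vd :: "(real \<Rightarrow> 'a::real_normed_vector) \<Rightarrow> real \<Rightarrow> 'a" where
  "vd f x = vector_derivative f (at x)"

definition smooth_on :: "real set \<Rightarrow> (real \<Rightarrow> 'a::real_normed_vector) \<Rightarrow> bool" where
  "smooth_on I f \<longleftrightarrow> (\<forall>n. \<forall>x\<in>I. ((vd ^^ n) f) differentiable (at x))"

definition C2_on :: "real set \<Rightarrow> (real \<Rightarrow> 'a::real_normed_vector) \<Rightarrow> bool" where
  "C2_on I f \<longleftrightarrow> (\<forall>x\<in>I. f differentiable (at x) \<and> vd f differentiable (at x))
      \<and> continuous_on I (vd (vd f))"

end

theory Submission
  imports Defs
begin

(* The equation  \<Delta>^(-h) (\<Delta>^(h+1) R')' = V R  is the Sturm-Liouville equation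
   (D R')' = W R  with weight D = \<Delta>^(h+1) and potential W = \<Delta>^h V.
   With  A = \<alpha> + \<beta>' D,  B = \<alpha>' + \<beta> W,  \<gamma> = \<alpha> A - \<beta> D B  and  chi = \<alpha> R + \<beta> D R' :
     (1) chi' = B R + A R'                             (product rule and the equation),
     (2) \<gamma> R = A chi - \<beta> D chi',  \<gamma> R' = -B chi + \<alpha> chi'   (inverting the linear system (1)),
     (3) differentiating the first identity of (2) and eliminating R, R' by (2) gives
         (D chi')' = F D chi' + (W + ((2\<alpha> + \<beta>' D)' - F A) / \<beta>) chi,   F = \<gamma>'/\<gamma>. *)

lemma vd_has_vector_derivative:
  "f differentiable (at x) \<Longrightarrow> (f has_vector_derivative vd f x) (at x)"
  by (simp add: vd_def vector_derivative_works)

lemma vd_add: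
  "f differentiable (at x) \<Longrightarrow> g differentiable (at x) \<Longrightarrow> vd (\<lambda>r. f r + g r) x = vd f x + vd g x"
  by (simp add: vd_def)

lemma vd_diff:
  "f differentiable (at x) \<Longrightarrow> g differentiable (at x) \<Longrightarrow> vd (\<lambda>r. f r - g r) x = vd f x - vd g x"
  by (simp add: vd_def)

lemma vd_cmult:
  fixes f :: "real \<Rightarrow> 'a::real_normed_algebra"
  shows "f differentiable (at x) \<Longrightarrow> vd (\<lambda>r. c * f r) x = c * vd f x"
  by (simp add: vd_def)

lemma vd_mult:
  fixes f g :: "real \<Rightarrow> 'a::real_normed_algebra"
  shows "f differentiable (at x) \<Longrightarrow> g differentiable (at x) \<Longrightarrow>
    vd (\<lambda>r. f r * g r) x = f x * vd g x + vd f x * g x"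
  by (simp add: vd_def)

text \<open>Derivative and differentiability at a point only depend on the function on an open
  neighbourhood; this lets us differentiate identities that hold on an open interval.\<close>

lemma vd_cong_open:
  assumes "open S" "x \<in> S" "\<And>y. y \<in> S \<Longrightarrow> f y = g y"
  shows "vd f x = vd g x"
proof -
  have "(f has_vector_derivative d) (at x) \<longleftrightarrow> (g has_vector_derivative d) (at x)" for d
    using assms has_vector_derivative_transform_within_open[of _ d x S] by metis
  then show ?thesis by (simp add: vd_def vector_derivative_def)
qed

lemma differentiable_cong_open:
  assumes "f differentiable (at x)" "open S" "x \<in> S" "\<And>y. y \<in> S \<Longrightarrow> f y = g y"
  shows "g differentiable (at x)"
  using assms has_derivative_transform_within_open unfolding differentiable_def by metis

lemma smooth_on_differentiable:
  assumes "smooth_on I f" "x \<in> I"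
  shows "f differentiable (at x)" and "vd f differentiable (at x)"
proof -
  have "(vd ^^ 0) f differentiable (at x)" "(vd ^^ 1) f differentiable (at x)"
    using assms unfolding smooth_on_def by blast+
  then show "f differentiable (at x)" "vd f differentiable (at x)" by simp_all
qed

lemma C2_on_differentiable:
  assumes "C2_on I f" "x \<in> I"
  shows "f differentiable (at x)" and "vd f differentiable (at x)"
  using assms unfolding C2_on_def by auto

lemma powr_of_real_differentiable:
  fixes \<Delta> :: "real \<Rightarrow> real"
  assumes "\<Delta> differentiable (at x)" "\<Delta> x > 0"
  shows "(\<lambda>r. of_real (\<Delta> r powr c) :: 'a::real_normed_algebra_1) differentiable (at x)"
proof -
  have "(\<Delta> has_real_derivative vd \<Delta> x) (at x)"
    using vd_has_vector_derivative[OF assms(1)] has_real_derivative_iff_has_vector_derivative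
    by blast
  from DERIV_powr[OF this assms(2) DERIV_const[of c]]
  have "((\<lambda>r. \<Delta> r powr c) has_real_derivative
          \<Delta> x powr c * (0 * ln (\<Delta> x) + vd \<Delta> x * c / \<Delta> x)) (at x)" .
  from has_vector_derivative_of_real[OF this] show ?thesis
    by (rule differentiableI_vector)
qed

lemma of_real_powr_cancel:
  fixes d :: real
  assumes "d > 0"
  shows "(of_real (d powr (-h)) :: 'a::real_normed_algebra_1) * of_real (d powr h) = 1"
    and "(of_real (d powr (-h)) :: 'a) * of_real (d powr (h + 1)) = of_real d"
  using assms by (simp_all flip: of_real_mult add: powr_add[symmetric])

text \<open>Inverting the linear map (R, R') \<mapsto> (chi, chi'): its determinant is \<gamma>.\<close>

lemma darboux_inversion:
  fixes \<alpha> \<beta> A B D R R' chi chi' \<gamma> :: "'a::comm_ring"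
  assumes "chi = \<alpha> * R + \<beta> * (D * R')" "chi' = B * R + A * R'" "\<gamma> = \<alpha> * A - \<beta> * D * B"
  shows "\<gamma> * R = A * chi - \<beta> * D * chi'" and "\<gamma> * R' = - B * chi + \<alpha> * chi'"
  unfolding assms by (simp_all add: algebra_simps)

text \<open>Eliminating R and R' from the derivative of the identity \<gamma> R = A chi - \<beta> G,
  where G = D chi' is the flux of chi.\<close>

lemma darboux_elimination:
  fixes \<alpha> \<alpha>' \<beta> \<beta>' A A' B D W R R' chi chi' G G' \<gamma> \<gamma>' du :: "'a::field"
  assumes "\<beta> \<noteq> 0" "\<gamma> \<noteq> 0"
    and "\<gamma> * R = A * chi - \<beta> * G" "\<gamma> * R' = - B * chi + \<alpha> * chi'"
    and derivative: "\<gamma>' * R + \<gamma> * R' = A' * chi + A * chi' - (\<beta>' * G + \<beta> * G')"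
    and "G = D * chi'" "A = \<alpha> + \<beta>' * D" "B = \<alpha>' + \<beta> * W" "du = \<alpha>' + A'"
  shows "G' = \<gamma>' / \<gamma> * D * chi' + (W + (du - \<gamma>' / \<gamma> * A) / \<beta>) * chi"
proof -
  have "\<gamma> * \<beta> * G' = \<gamma> * (A' * chi + A * chi' - \<beta>' * G) - \<gamma>' * (\<gamma> * R) - \<gamma> * (\<gamma> * R')"
    using derivative by algebra
  also have "\<dots> = \<gamma> * \<beta> * (\<gamma>' / \<gamma> * D * chi' + (W + (du - \<gamma>' / \<gamma> * A) / \<beta>) * chi)"
    using assms by (simp add: field_simps) algebra
  finally show ?thesis using assms(1,2) by simp
qed

locale sturm_liouville =
  fixes I :: "real set" and D W R :: "real \<Rightarrow> 'a::real_normed_field"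
  assumes open_I: "open I"
    and D_diff: "\<And>y. y \<in> I \<Longrightarrow> D differentiable (at y)"
    and W_diff: "\<And>y. y \<in> I \<Longrightarrow> W differentiable (at y)"
    and R_diff: "\<And>y. y \<in> I \<Longrightarrow> R differentiable (at y)"
    and flux_diff: "\<And>y. y \<in> I \<Longrightarrow> (\<lambda>r. D r * vd R r) differentiable (at y)"
    and flux_eq: "\<And>y. y \<in> I \<Longrightarrow> vd (\<lambda>r. D r * vd R r) y = W y * R y"

locale darboux_transformation = sturm_liouville I D W R
    for I and D W R :: "real \<Rightarrow> 'a::real_normed_field" +
  fixes \<alpha> \<beta> :: "real \<Rightarrow> 'a"
  assumes \<alpha>_diff: "\<And>y. y \<in> I \<Longrightarrow> \<alpha> differentiable (at y) \<and> vd \<alpha> differentiable (at y)"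
    and \<beta>_diff: "\<And>y. y \<in> I \<Longrightarrow> \<beta> differentiable (at y) \<and> vd \<beta> differentiable (at y)"
begin

definition A :: "real \<Rightarrow> 'a" where "A r = \<alpha> r + vd \<beta> r * D r"
definition B :: "real \<Rightarrow> 'a" where "B r = vd \<alpha> r + \<beta> r * W r"
definition \<gamma> :: "real \<Rightarrow> 'a" where "\<gamma> r = \<alpha> r * A r - \<beta> r * D r * B r"
definition chi :: "real \<Rightarrow> 'a" where "chi r = \<alpha> r * R r + \<beta> r * (D r * vd R r)"

lemma derived_differentiable:
  assumes "y \<in> I"
  shows A_diff: "A differentiable (at y)" and B_diff: "B differentiable (at y)"
    and \<gamma>_diff: "\<gamma> differentiable (at y)" and chi_diff: "chi differentiable (at y)"
proof -
  note basic = \<alpha>_diff[OF assms] \<beta>_diff[OF assms] D_diff[OF assms] W_diff[OF assms]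
    R_diff[OF assms] flux_diff[OF assms]
  show A: "A differentiable (at y)" and B: "B differentiable (at y)"
    using basic by (simp_all add: A_def[abs_def] B_def[abs_def])
  show "\<gamma> differentiable (at y)"
    using A B basic by (simp add: \<gamma>_def[abs_def])
  show "chi differentiable (at y)"
    using basic by (simp add: chi_def[abs_def])
qed

lemma chi_derivative:
  assumes "y \<in> I"
  shows "vd chi y = B y * R y + A y * vd R y"
proof -
  have "vd chi y = \<alpha> y * vd R y + vd \<alpha> y * R y + (\<beta> y * (W y * R y) + vd \<beta> y * (D y * vd R y))"
    using \<alpha>_diff \<beta>_diff R_diff flux_diff flux_eq assms
    unfolding chi_def[abs_def] by (simp add: vd_add vd_mult)
  then show ?thesis by (simp add: A_def B_def algebra_simps)
qed

lemma R_from_chi: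
  assumes "y \<in> I"
  shows "\<gamma> y * R y = A y * chi y - \<beta> y * D y * vd chi y"
    and "\<gamma> y * vd R y = - B y * chi y + \<alpha> y * vd chi y"
  using darboux_inversion[OF chi_def chi_derivative[OF assms] \<gamma>_def] .

text \<open>The flux D chi' agrees on I with a manifestly differentiable expression.\<close>

lemma flux_chi_diff:
  assumes "y \<in> I"
  shows "(\<lambda>r. D r * vd chi r) differentiable (at y)"
proof (rule differentiable_cong_open[OF _ open_I assms])
  show "(\<lambda>r. D r * B r * R r + A r * (D r * vd R r)) differentiable (at y)"
    using A_diff B_diff D_diff R_diff flux_diff assms by auto
  show "D r * B r * R r + A r * (D r * vd R r) = D r * vd chi r" if "r \<in> I" for r
    unfolding chi_derivative[OF that] by (simp add: algebra_simps)
qed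

lemma chi_equation:
  assumes x: "x \<in> I" and "\<beta> x \<noteq> 0" "\<gamma> x \<noteq> 0"
  shows "vd (\<lambda>r. D r * vd chi r) x
           = vd \<gamma> x / \<gamma> x * D x * vd chi x
             + (W x + (vd (\<lambda>s. 2 * \<alpha> s + vd \<beta> s * D s) x - vd \<gamma> x / \<gamma> x * A x) / \<beta> x) * chi x"
proof -
  define G where "G = (\<lambda>r. D r * vd chi r)"
  have G_diff: "G differentiable (at x)"
    using flux_chi_diff[OF x] by (simp add: G_def)
  have inverse: "\<gamma> y * R y = A y * chi y - \<beta> y * G y" if "y \<in> I" for y
    using R_from_chi(1)[OF that] by (simp add: G_def mult.assoc)
  have "vd (\<lambda>r. \<gamma> r * R r) x = vd (\<lambda>r. A r * chi r - \<beta> r * G r) x"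
    by (rule vd_cong_open[OF open_I x]) (rule inverse)
  then have derivative:
      "vd \<gamma> x * R x + \<gamma> x * vd R x = vd A x * chi x + A x * vd chi x - (vd \<beta> x * G x + \<beta> x * vd G x)"
    using \<gamma>_diff[OF x] R_diff[OF x] A_diff[OF x] chi_diff[OF x] \<beta>_diff[OF x] G_diff
    by (simp add: vd_mult vd_diff algebra_simps)
  have "vd (\<lambda>s. 2 * \<alpha> s + vd \<beta> s * D s) x = 2 * vd \<alpha> x + vd (\<lambda>s. vd \<beta> s * D s) x"
    and "vd A x = vd \<alpha> x + vd (\<lambda>s. vd \<beta> s * D s) x"
    using \<alpha>_diff[OF x] \<beta>_diff[OF x] D_diff[OF x] unfolding A_def[abs_def]
    by (simp_all add: vd_add vd_cmult)
  then have "vd (\<lambda>s. 2 * \<alpha> s + vd \<beta> s * D s) x = vd \<alpha> x + vd A x"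
    by simp
  from darboux_elimination[OF assms(2,3) inverse[OF x] R_from_chi(2)[OF x] derivative _ A_def B_def this]
  show ?thesis
    by (simp add: G_def)
qed

text \<open>The same equation multiplied by an arbitrary factor E; for the main theorem
  E = \<Delta>^(-h), which turns D into \<Delta> and W into V.\<close>

lemma chi_equation_scaled:
  assumes "x \<in> I" "\<beta> x \<noteq> 0" "\<gamma> x \<noteq> 0"
  shows "E * vd (\<lambda>r. D r * vd chi r) x - E * D x * (vd \<gamma> x / \<gamma> x) * vd chi x
           - (E * W x + E * ((vd (\<lambda>s. 2 * \<alpha> s + vd \<beta> s * D s) x - vd \<gamma> x / \<gamma> x * A x) / \<beta> x))
             * chi x = 0"
  unfolding chi_equation[OF assms] by (simp add: algebra_simps)

end

lemma darboux_transformation_powr: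
  fixes \<Delta> :: "real \<Rightarrow> real" and V \<alpha> \<beta> R :: "real \<Rightarrow> complex"
  assumes "open I" and \<Delta>_pos: "\<forall>x\<in>I. \<Delta> x > 0" and \<Delta>_smooth: "smooth_on I \<Delta>"
    and V_smooth: "smooth_on I V" and "smooth_on I \<alpha>" "smooth_on I \<beta>" and "C2_on I R"
    and ode: "\<forall>x\<in>I. complex_of_real (\<Delta> x powr (-h))
                 * vd (\<lambda>r. complex_of_real (\<Delta> r powr (h+1)) * vd R r) x = V x * R x"
  shows "darboux_transformation I (\<lambda>r. complex_of_real (\<Delta> r powr (h+1)))
           (\<lambda>r. complex_of_real (\<Delta> r powr h) * V r) R \<alpha> \<beta>"
proof -
  have powr_diff: "(\<lambda>r. complex_of_real (\<Delta> r powr c)) differentiable (at y)" if "y \<in> I" for c y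
    using powr_of_real_differentiable smooth_on_differentiable(1)[OF \<Delta>_smooth that]
      \<Delta>_pos that by blast
  have flux_eq: "vd (\<lambda>r. complex_of_real (\<Delta> r powr (h+1)) * vd R r) y
                   = complex_of_real (\<Delta> y powr h) * V y * R y" if "y \<in> I" for y
    using arg_cong[OF ode[rule_format, OF that], of "\<lambda>z. complex_of_real (\<Delta> y powr h) * z"]
      of_real_powr_cancel(1)[OF \<Delta>_pos[rule_format, OF that], of h, where 'a=complex]
    by (simp add: mult.assoc[symmetric] mult.commute[of "complex_of_real (\<Delta> y powr h)"])
  show ?thesis
    using assms(1) powr_diff flux_eq smooth_on_differentiable[OF V_smooth]
      smooth_on_differentiable[OF assms(5)] smooth_on_differentiable[OF assms(6)]
      C2_on_differentiable[OF assms(7)]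
    by unfold_locales auto
qed

theorem mainTheorem3:
  fixes I :: "real set" and h :: real and \<Delta> :: "real \<Rightarrow> real"
    and V \<alpha> \<beta> R \<gamma> chi F U :: "real \<Rightarrow> complex"
  assumes I_open: "open I" and I_int: "is_interval I"
    and \<Delta>_pos: "\<forall>x\<in>I. \<Delta> x > 0" and \<Delta>_smooth: "smooth_on I \<Delta>"
    and V_smooth: "smooth_on I V"
    and \<alpha>_smooth: "smooth_on I \<alpha>" and \<beta>_smooth: "smooth_on I \<beta>"
    and \<beta>_nz: "\<forall>x\<in>I. \<beta> x \<noteq> 0"
    and R_C2: "C2_on I R"
    and ode: "\<forall>x\<in>I. complex_of_real (\<Delta> x powr (-h))
                 * vd (\<lambda>r. complex_of_real (\<Delta> r powr (h+1)) * vd R r) x = V x * R x"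
    and \<gamma>_def: "\<gamma> = (\<lambda>r. \<alpha> r * (\<alpha> r + vd \<beta> r * complex_of_real (\<Delta> r powr (h+1)))
                 - \<beta> r * complex_of_real (\<Delta> r powr (h+1))
                   * (vd \<alpha> r + \<beta> r * complex_of_real (\<Delta> r powr h) * V r))"
    and \<gamma>_nz: "\<forall>x\<in>I. \<gamma> x \<noteq> 0"
    and chi_def: "chi = (\<lambda>r. \<alpha> r * R r + \<beta> r * complex_of_real (\<Delta> r powr (h+1)) * vd R r)"
    and F_def: "F = (\<lambda>r. vd \<gamma> r / \<gamma> r)"
    and U_def: "U = (\<lambda>r. V r + complex_of_real (\<Delta> r powr (-h)) / \<beta> r
                 * (vd (\<lambda>s. 2 * \<alpha> s + vd \<beta> s * complex_of_real (\<Delta> s powr (h+1))) r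
                    - F r * (\<alpha> r + vd \<beta> r * complex_of_real (\<Delta> r powr (h+1)))))"
  shows "(\<forall>x\<in>I. chi differentiable (at x)
           \<and> (\<lambda>r. complex_of_real (\<Delta> r powr (h+1)) * vd chi r) differentiable (at x)
           \<and> complex_of_real (\<Delta> x powr (-h))
               * vd (\<lambda>r. complex_of_real (\<Delta> r powr (h+1)) * vd chi r) x
             - complex_of_real (\<Delta> x) * F x * vd chi x - U x * chi x = 0)
      \<and> (\<forall>x\<in>I. \<gamma> x * R x = (\<alpha> x + vd \<beta> x * complex_of_real (\<Delta> x powr (h+1))) * chi x
                          - \<beta> x * complex_of_real (\<Delta> x powr (h+1)) * vd chi x)
      \<and> (\<forall>x\<in>I. \<gamma> x * vd R x = - (vd \<alpha> x + \<beta> x * complex_of_real (\<Delta> x powr h) * V x) * chi x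
                          + \<alpha> x * vd chi x)"
proof -
  interpret T: darboux_transformation I "\<lambda>r. complex_of_real (\<Delta> r powr (h+1))"
      "\<lambda>r. complex_of_real (\<Delta> r powr h) * V r" R \<alpha> \<beta>
    using darboux_transformation_powr[OF I_open \<Delta>_pos \<Delta>_smooth V_smooth \<alpha>_smooth \<beta>_smooth R_C2 ode] .
  have \<gamma>: "\<gamma> = T.\<gamma>" and chi: "chi = T.chi"
    unfolding \<gamma>_def chi_def T.\<gamma>_def[abs_def] T.chi_def[abs_def] T.A_def T.B_def
    by (simp_all add: algebra_simps)
  show ?thesis
  proof (intro conjI ballI)
    fix x assume x: "x \<in> I"
    note cancel = of_real_powr_cancel[OF \<Delta>_pos[rule_format, OF x], where 'a=complex]
    show "chi differentiable (at x)"
      using T.chi_diff[OF x] by (simp add: chi)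
    show "(\<lambda>r. complex_of_real (\<Delta> r powr (h+1)) * vd chi r) differentiable (at x)"
      using T.flux_chi_diff[OF x] by (simp add: chi)
    show "complex_of_real (\<Delta> x powr (-h))
            * vd (\<lambda>r. complex_of_real (\<Delta> r powr (h+1)) * vd chi r) x
          - complex_of_real (\<Delta> x) * F x * vd chi x - U x * chi x = 0"
      using T.chi_equation_scaled[OF x \<beta>_nz[rule_format, OF x] \<gamma>_nz[rule_format, OF x, unfolded \<gamma>],
          of "complex_of_real (\<Delta> x powr (-h))"] cancel
      by (simp add: F_def U_def \<gamma> chi T.A_def mult.assoc[symmetric])
    show "\<gamma> x * R x = (\<alpha> x + vd \<beta> x * complex_of_real (\<Delta> x powr (h+1))) * chi x
            - \<beta> x * complex_of_real (\<Delta> x powr (h+1)) * vd chi x"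
      using T.R_from_chi(1)[OF x] by (simp add: \<gamma> chi T.A_def)
    show "\<gamma> x * vd R x = - (vd \<alpha> x + \<beta> x * complex_of_real (\<Delta> x powr h) * V x) * chi x
            + \<alpha> x * vd chi x"
      using T.R_from_chi(2)[OF x] by (simp add: \<gamma> chi T.B_def mult.assoc)
  qed
qed

end
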